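(* Let $X$ be a prelength space and $Y$ a metric space. The function $\mathrm{ap}:\mathfrak{C}(X\to Y)\to(\mathfrak{C}(X)\to\mathfrak{C}(Y))$ is uniformly continuous with modulus $\lambda\varepsilon.\varepsilon$; that is, whenever $B'_\varepsilon(f_1,f_2)$ holds in $\mathfrak{C}(X\to Y)$, then $B'_\varepsilon(\mathrm{ap}(f_1)(x),\mathrm{ap}(f_2)(x))$ holds for every $x\in\mathfrak{C}(X)$.
   Context: $\mathbb{Q}^+$ denotes the strictly positive rationals; all $\varepsilon,\delta$ (with indices) range over $\mathbb{Q}^+$. A metric space is a triple $(X,\asymp,B)$ where $\asymp$ is an equivalence relation on $X$ and $B$ assigns to each $\varepsilon\in\mathbb{Q}^+$ a binary relation $B_\varepsilon$ on $X$ respecting $\asymp$, such that: (1) each $B_\varepsilon$ is reflexive; (2) each $B_\varepsilon$ is symmetric; (3) if $B_{\varepsilon_1}(a,b)$ and $B_{\varepsilon_2}(b,c)$ then $B_{\varepsilon_1+\varepsilon_2}(a,c)$; (4) if $B_{\varepsilon+\delta}(a,b)$ for all $\delta$, then $B_\varepsilon(a,b)$; (5) if $B_\varepsilon(a,b)$ for all $\varepsilon$, then $a\asymp b$. A prelength space is a metric space such that for all $a,b,\varepsilon,\delta_1,\delta_2$ with $\varepsilon<\delta_1+\delta_2$ and $B_\varepsilon(a,b)$ there exists $c$ with $B_{\delta_1}(a,c)$ and $B_{\delta_2}(c,b)$. A regular function over a metric space $W$ is a function $x:\mathbb{Q}^+\to W$ such that $B_{\varepsilon_1+\varepsilon_2}(x(\varepsilon_1),x(\varepsilon_2))$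 for all $\varepsilon_1,\varepsilon_2$; $\mathfrak{C}(W)$ is the metric space of regular functions with $x\asymp y$ iff $B_{2\varepsilon}(x(\varepsilon),y(\varepsilon))$ for all $\varepsilon$ and $B'_\varepsilon(x,y)$ iff $B_{\varepsilon+\delta_1+\delta_2}(x(\delta_1),y(\delta_2))$ for all $\delta_1,\delta_2$. A uniformly continuous function $g:X\to Y$ is a pair of a function and a modulus $\mu_g$ with $B^X_{\mu_g(\varepsilon)}(x_1,x_2)\Rightarrow B^Y_\varepsilon(g(x_1),g(x_2))$. For metric spaces $U,V$, $U\to V$ is the metric space of uniformly continuous functions with $B_\varepsilon(g,h)$ iff $B^V_\varepsilon(g(a),h(a))$ for all $a\in U$, and $g\asymp h$ iff $g(a)\asymp h(a)$ for all $a$. $\mathrm{map}(g)(x)=\lambda\varepsilon.\,g(x(\mu_g(\varepsilon)))$, and for $f\in\mathfrak{C}(X\to Y)$, $\mathrm{ap}(f)(x)=\lambda\varepsilon.\,\mathrm{map}(f(\tfrac{\varepsilon}{2}))(x)(\tfrac{\varepsilon}{2})$. *)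

theory Defs
  imports Complex_Main
begin

text \<open>Metric spaces in the sense of the paper: a carrier S, an equivalence relation eq on S,
  and ball relations B e (for positive rationals e) on S respecting eq.
  Positive rationals are modelled as rationals with an explicit positivity guard.\<close>

definition metric_sp :: "'a set \<Rightarrow> ('a \<Rightarrow> 'a \<Rightarrow> bool) \<Rightarrow> (rat \<Rightarrow> 'a \<Rightarrow> 'a \<Rightarrow> bool) \<Rightarrow> bool" where
  "metric_sp S eq B \<longleftrightarrow>
     (\<forall>a\<in>S. eq a a) \<and>
     (\<forall>a\<in>S. \<forall>b\<in>S. eq a b \<longrightarrow> eq b a) \<and>
     (\<forall>a\<in>S. \<forall>b\<in>S. \<forall>c\<in>S. eq a b \<longrightarrow> eq b c \<longrightarrow> eq a c) \<and>
     (\<forall>e>0. \<forall>a\<in>S. \<forall>a'\<in>S. \<forall>b\<in>S. \<forall>b'\<in>S. eq a a' \<longrightarrow> eq b b' \<longrightarrow> B e a b \<longrightarrow> B e a' b') \<and>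
     (\<forall>e>0. \<forall>a\<in>S. B e a a) \<and>
     (\<forall>e>0. \<forall>a\<in>S. \<forall>b\<in>S. B e a b \<longrightarrow> B e b a) \<and>
     (\<forall>e1>0. \<forall>e2>0. \<forall>a\<in>S. \<forall>b\<in>S. \<forall>c\<in>S. B e1 a b \<longrightarrow> B e2 b c \<longrightarrow> B (e1 + e2) a c) \<and>
     (\<forall>e>0. \<forall>a\<in>S. \<forall>b\<in>S. (\<forall>d>0. B (e + d) a b) \<longrightarrow> B e a b) \<and>
     (\<forall>a\<in>S. \<forall>b\<in>S. (\<forall>e>0. B e a b) \<longrightarrow> eq a b)"

definition prelength_sp :: "'a set \<Rightarrow> ('a \<Rightarrow> 'a \<Rightarrow> bool) \<Rightarrow> (rat \<Rightarrow> 'a \<Rightarrow> 'a \<Rightarrow> bool) \<Rightarrow> bool" where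
  "prelength_sp S eq B \<longleftrightarrow> metric_sp S eq B \<and>
     (\<forall>a\<in>S. \<forall>b\<in>S. \<forall>e>0. \<forall>d1>0. \<forall>d2>0. e < d1 + d2 \<longrightarrow> B e a b \<longrightarrow>
        (\<exists>c\<in>S. B d1 a c \<and> B d2 c b))"

text \<open>Regular functions over (S,B): the carrier of the completion.\<close>
definition regular :: "'a set \<Rightarrow> (rat \<Rightarrow> 'a \<Rightarrow> 'a \<Rightarrow> bool) \<Rightarrow> (rat \<Rightarrow> 'a) set" where
  "regular S B = {x. (\<forall>e>0. x e \<in> S) \<and> (\<forall>e1>0. \<forall>e2>0. B (e1 + e2) (x e1) (x e2))}"

definition C_eq :: "(rat \<Rightarrow> 'a \<Rightarrow> 'a \<Rightarrow> bool) \<Rightarrow> (rat \<Rightarrow> 'a) \<Rightarrow> (rat \<Rightarrow> 'a) \<Rightarrow> bool" where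
  "C_eq B x y \<longleftrightarrow> (\<forall>e>0. B (2 * e) (x e) (y e))"

definition C_ball :: "(rat \<Rightarrow> 'a \<Rightarrow> 'a \<Rightarrow> bool) \<Rightarrow> rat \<Rightarrow> (rat \<Rightarrow> 'a) \<Rightarrow> (rat \<Rightarrow> 'a) \<Rightarrow> bool" where
  "C_ball B e x y \<longleftrightarrow> (\<forall>d1>0. \<forall>d2>0. B (e + d1 + d2) (x d1) (y d2))"

definition ucfun :: "'a set \<Rightarrow> (rat \<Rightarrow> 'a \<Rightarrow> 'a \<Rightarrow> bool) \<Rightarrow> 'b set \<Rightarrow> (rat \<Rightarrow> 'b \<Rightarrow> 'b \<Rightarrow> bool)
    \<Rightarrow> (('a \<Rightarrow> 'b) \<times> (rat \<Rightarrow> rat)) set" where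
  "ucfun SX BX SY BY = {(g, \<mu>). (\<forall>a\<in>SX. g a \<in> SY) \<and> (\<forall>e>0. \<mu> e > 0) \<and>
      (\<forall>e>0. \<forall>a1\<in>SX. \<forall>a2\<in>SX. BX (\<mu> e) a1 a2 \<longrightarrow> BY e (g a1) (g a2))}"

definition fun_eq :: "'a set \<Rightarrow> ('b \<Rightarrow> 'b \<Rightarrow> bool) \<Rightarrow> (('a \<Rightarrow> 'b) \<times> (rat \<Rightarrow> rat))
    \<Rightarrow> (('a \<Rightarrow> 'b) \<times> (rat \<Rightarrow> rat)) \<Rightarrow> bool" where
  "fun_eq SX eqY g h \<longleftrightarrow> (\<forall>a\<in>SX. eqY (fst g a) (fst h a))"

definition fun_ball :: "'a set \<Rightarrow> (rat \<Rightarrow> 'b \<Rightarrow> 'b \<Rightarrow> bool) \<Rightarrow> rat \<Rightarrow> (('a \<Rightarrow> 'b) \<times> (rat \<Rightarrow> rat))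
    \<Rightarrow> (('a \<Rightarrow> 'b) \<times> (rat \<Rightarrow> rat)) \<Rightarrow> bool" where
  "fun_ball SX BY e g h \<longleftrightarrow> (\<forall>a\<in>SX. BY e (fst g a) (fst h a))"

definition cmap :: "(('a \<Rightarrow> 'b) \<times> (rat \<Rightarrow> rat)) \<Rightarrow> (rat \<Rightarrow> 'a) \<Rightarrow> (rat \<Rightarrow> 'b)" where
  "cmap g x = (\<lambda>e. fst g (x (snd g e)))"

definition cap :: "(rat \<Rightarrow> (('a \<Rightarrow> 'b) \<times> (rat \<Rightarrow> rat))) \<Rightarrow> (rat \<Rightarrow> 'a) \<Rightarrow> (rat \<Rightarrow> 'b)" where
  "cap f x = (\<lambda>e. cmap (f (e / 2)) x (e / 2))"

end

theory Submission
  imports Defs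
begin

text \<open>Given \<open>\<delta>\<^sub>1, \<delta>\<^sub>2\<close>, the approximants \<open>ap(f\<^sub>i)(x)(\<delta>\<^sub>i)\<close> are \<open>g(a)\<close> and \<open>h(b)\<close> with
  \<open>g = f\<^sub>1(\<delta>\<^sub>1/2)\<close>, \<open>h = f\<^sub>2(\<delta>\<^sub>2/2)\<close>, and points \<open>a, b\<close> of \<open>x\<close> that are
  \<open>\<mu>\<^sub>g(\<delta>\<^sub>1/2) + \<mu>\<^sub>h(\<delta>\<^sub>2/2)\<close>-close. The prelength property supplies intermediate points
  \<open>a \<approx> c \<approx> c' \<approx> b\<close>, so that the chain \<open>g(a), g(c), h(c), h(c'), h(b)\<close> has total length
  \<open>\<delta>\<^sub>1/2 + (\<epsilon> + \<delta>\<^sub>1/2 + \<delta>\<^sub>2/2) + \<delta>\<^sub>2/2 + \<delta>\<close> for an arbitrary \<open>\<delta> > 0\<close>,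
  and closedness of the balls of \<open>Y\<close> removes \<open>\<delta>\<close>.\<close>

lemma metric_sp_triangle:
  assumes "metric_sp S eq B" "e1 > 0" "e2 > 0" "a \<in> S" "b \<in> S" "c \<in> S"
    and "B e1 a b" "B e2 b c"
  shows "B (e1 + e2) a c"
  using assms unfolding metric_sp_def by blast

lemma metric_sp_ball_closed:
  assumes "metric_sp S eq B" "e > 0" "a \<in> S" "b \<in> S" "\<And>d. d > 0 \<Longrightarrow> B (e + d) a b"
  shows "B e a b"
  using assms unfolding metric_sp_def by blast

lemma prelength_sp_split:
  assumes "prelength_sp S eq B" "a \<in> S" "b \<in> S" "e > 0" "d1 > 0" "d2 > 0"
    and "e < d1 + d2" "B e a b"
  obtains c where "c \<in> S" "B d1 a c" "B d2 c b"
  using assms unfolding prelength_sp_def by blast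

lemma prelength_sp_split3:
  assumes "prelength_sp S eq B" "a \<in> S" "b \<in> S" "e1 > 0" "e2 > 0" "t > 0"
    and "B (e1 + e2) a b"
  obtains c c' where "c \<in> S" "c' \<in> S" "B e1 a c" "B e2 c c'" "B t c' b"
proof -
  obtain c where c: "c \<in> S" "B e1 a c" "B (e2 + t/2) c b"
    using prelength_sp_split[OF assms(1-3), of "e1 + e2" e1 "e2 + t/2"] assms(4-7) by auto
  obtain c' where "c' \<in> S" "B e2 c c'" "B t c' b"
    using prelength_sp_split[OF assms(1) c(1) assms(3), of "e2 + t/2" e2 t] c(3) assms(5,6) by auto
  with c show thesis using that by blast
qed

lemma regularD:
  assumes "x \<in> regular S B" "e > 0"
  shows "x e \<in> S"
  using assms unfolding regular_def by blast

lemma regular_ball: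
  assumes "x \<in> regular S B" "e1 > 0" "e2 > 0"
  shows "B (e1 + e2) (x e1) (x e2)"
  using assms unfolding regular_def by blast

lemma ucfunD:
  assumes "g \<in> ucfun SX BX SY BY"
  shows ucfun_range: "a \<in> SX \<Longrightarrow> fst g a \<in> SY"
    and ucfun_modulus_pos: "e > 0 \<Longrightarrow> snd g e > 0"
    and ucfun_modulus: "e > 0 \<Longrightarrow> a1 \<in> SX \<Longrightarrow> a2 \<in> SX \<Longrightarrow> BX (snd g e) a1 a2
      \<Longrightarrow> BY e (fst g a1) (fst g a2)"
  using assms unfolding ucfun_def by auto

lemma fun_ball_imp_ball_apply:
  assumes X: "prelength_sp SX eqX BX" and Y: "metric_sp SY eqY BY"
    and g: "g \<in> ucfun SX BX SY BY" and h: "h \<in> ucfun SX BX SY BY"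
    and pos: "r > 0" "e1 > 0" "e2 > 0" and gh: "fun_ball SX BY r g h"
    and a: "a \<in> SX" and b: "b \<in> SX" and ab: "BX (snd g e1 + snd h e2) a b"
  shows "BY (e1 + r + e2) (fst g a) (fst h b)"
proof (rule metric_sp_ball_closed[OF Y])
  fix d :: rat assume "d > 0"
  obtain c c' where c: "c \<in> SX" and c': "c' \<in> SX"
    and "BX (snd g e1) a c" "BX (snd h e2) c c'" "BX (snd h d) c' b"
    using prelength_sp_split3[OF X a b _ _ _ ab] pos \<open>d > 0\<close>
      ucfun_modulus_pos[OF g] ucfun_modulus_pos[OF h] by metis
  then have 1: "BY e1 (fst g a) (fst g c)" and 2: "BY r (fst g c) (fst h c)"
    and 3: "BY e2 (fst h c) (fst h c')" and 4: "BY d (fst h c') (fst h b)"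
    using ucfun_modulus[OF g] ucfun_modulus[OF h] gh a b c c' pos \<open>d > 0\<close>
    unfolding fun_ball_def by blast+
  have in_SY: "fst g a \<in> SY" "fst g c \<in> SY" "fst h c \<in> SY" "fst h c' \<in> SY" "fst h b \<in> SY"
    using ucfun_range[OF g] ucfun_range[OF h] a b c c' by auto
  have "BY (e1 + r) (fst g a) (fst h c)"
    using metric_sp_triangle[OF Y pos(2,1) in_SY(1-3) 1 2] .
  then have "BY (e1 + r + e2) (fst g a) (fst h c')"
    using metric_sp_triangle[OF Y _ pos(3) in_SY(1,3,4) _ 3] pos by simp
  then show "BY (e1 + r + e2 + d) (fst g a) (fst h b)"
    using metric_sp_triangle[OF Y _ \<open>d > 0\<close> in_SY(1,4,5) _ 4] pos by simp
qed (use pos a b ucfun_range[OF g] ucfun_range[OF h] in auto)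

theorem theorem28:
  fixes SX :: "'a set" and eqX :: "'a \<Rightarrow> 'a \<Rightarrow> bool" and BX :: "rat \<Rightarrow> 'a \<Rightarrow> 'a \<Rightarrow> bool"
    and SY :: "'b set" and eqY :: "'b \<Rightarrow> 'b \<Rightarrow> bool" and BY :: "rat \<Rightarrow> 'b \<Rightarrow> 'b \<Rightarrow> bool"
    and f1 f2 :: "rat \<Rightarrow> (('a \<Rightarrow> 'b) \<times> (rat \<Rightarrow> rat))" and x :: "rat \<Rightarrow> 'a" and e :: rat
  assumes "prelength_sp SX eqX BX"
    and "metric_sp SY eqY BY"
    and "f1 \<in> regular (ucfun SX BX SY BY) (fun_ball SX BY)"
    and "f2 \<in> regular (ucfun SX BX SY BY) (fun_ball SX BY)"
    and "e > 0"
    and "C_ball (fun_ball SX BY) e f1 f2"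
    and "x \<in> regular SX BX"
  shows "C_ball BY e (cap f1 x) (cap f2 x)"
  unfolding C_ball_def
proof (intro allI impI)
  fix d1 d2 :: rat assume "d1 > 0" "d2 > 0"
  define g h where "g = f1 (d1/2)" and "h = f2 (d2/2)"
  have g: "g \<in> ucfun SX BX SY BY" and h: "h \<in> ucfun SX BX SY BY"
    using regularD[OF assms(3)] regularD[OF assms(4)] \<open>d1 > 0\<close> \<open>d2 > 0\<close> unfolding g_def h_def by auto
  have gh: "fun_ball SX BY (e + d1/2 + d2/2) g h"
    using assms(6) \<open>d1 > 0\<close> \<open>d2 > 0\<close> unfolding C_ball_def g_def h_def by auto
  have moduli: "snd g (d1/2) > 0" "snd h (d2/2) > 0"
    using ucfun_modulus_pos[OF g] ucfun_modulus_pos[OF h] \<open>d1 > 0\<close> \<open>d2 > 0\<close> by auto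
  have "BY (d1/2 + (e + d1/2 + d2/2) + d2/2) (fst g (x (snd g (d1/2)))) (fst h (x (snd h (d2/2))))"
    using \<open>d1 > 0\<close> \<open>d2 > 0\<close> \<open>e > 0\<close> moduli
    by (intro fun_ball_imp_ball_apply[OF assms(1,2) g h _ _ _ gh] regularD[OF assms(7)]
        regular_ball[OF assms(7)]) auto
  moreover have "d1/2 + (e + d1/2 + d2/2) + d2/2 = e + d1 + d2"
    by (simp add: field_simps)
  ultimately show "BY (e + d1 + d2) (cap f1 x d1) (cap f2 x d2)"
    unfolding cap_def cmap_def g_def[symmetric] h_def[symmetric] by metis
qed

end
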